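(* Let $(S,d)$ be a metric space. Then $E^S_\bullet\subset J^S_\bullet$ for $\bullet=\mathrm{BL}$ and for $\bullet=\mathrm{FM}$.
   Context: $\mathrm{BL}(S)$ is the space of bounded real-valued Lipschitz functions on $S$, $|f|_L=\sup_{x\neq y}|f(x)-f(y)|/d(x,y)$ (with $|f|_L=0$ on a singleton), $\|f\|_{\mathrm{BL}}=\|f\|_\infty+|f|_L$, $\|f\|_{\mathrm{FM}}=\max(\|f\|_\infty,|f|_L)$, $B^S_\bullet=\{f\in\mathrm{BL}(S):\|f\|_\bullet\le1\}$. Subsets $P\subset S$ carry the restricted metric; $\operatorname{ext}$ denotes extreme points and $\operatorname{ext}_*(B^P_\bullet)=\operatorname{ext}(B^P_\bullet)\setminus\{f:|f|=\mathbf{1}\}$. $M_f=\{x\in S:|f(x)|=\|f\|_\infty\}$. For non-empty $P\subset S$, $f\in\mathrm{BL}(P)$: $\mathcal{E}^{S,0}_P f(x)=\sup_{p\in P}[f(p)-|f|_L d(p,x)]$, $\mathcal{E}^S_P f=\max(\mathcal{E}^{S,0}_P f,-\|f\|_\infty)$. $E^S_{\mathrm{BL}}=\bigcup_{P\subset S\text{ finite}}\mathcal{E}^S_P(\operatorname{ext}_*(B^P_{\mathrm{BL}}))\cup\{\mathbf{1},-\mathbf{1}\}$; $E^S_{\mathrm{FM}}=\bigcup_{P\subset S\text{ finite}}\mathcal{E}^S_P(\operatorname{ext}_*(B^P_{\mathrm{FM}}))\cup\{f\in B^S_{\mathrm{FM}}:|f|=\mathbf{1}\}\cup\{h_P:P\subset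 S\text{ finite, non-empty}\}$, with $h_P(x)=\max\big(-1,\sup_{p\in P}[1-d(x,p)]\big)$. $J^S_{\mathrm{FM}}$ is the set of $f\in B^S_{\mathrm{FM}}$ with $\|f\|_\infty=1$ for which there is a finite non-empty $P_f\subset S$ such that for every $x\in S\setminus M_f$ there exists $p\in P_f$ with $|f(x)-f(p)|=d(x,p)$. $J^S_{\mathrm{BL}}=\{\mathbf{1},-\mathbf{1}\}\cup\hat J^S_{\mathrm{BL}}$, where $\hat J^S_{\mathrm{BL}}$ is the set of $f\in B^S_{\mathrm{BL}}$ with $\|f\|_{\mathrm{BL}}=1$, $f(M_f)=\{\|f\|_\infty,-\|f\|_\infty\}$, and for which there is a finite non-empty $P_f\subset S$ such that for every $x\in S\setminus M_f$ there exists $p\in P_f$ with $|f(x)-f(p)|=(1-\|f\|_\infty)d(x,p)$. *)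

theory Defs
  imports Complex_Main
begin

text \<open>The metric space S is the whole carrier of a type of class metric_space.
  A real function on a subset P is represented by a function on the type
  that vanishes outside P (so that each function on P has a unique representative).\<close>

definition sup_norm :: "'a set \<Rightarrow> ('a \<Rightarrow> real) \<Rightarrow> real" where
  "sup_norm P f = Sup (insert 0 ((\<lambda>x. \<bar>f x\<bar>) ` P))"

definition lip_quots :: "'a::metric_space set \<Rightarrow> ('a \<Rightarrow> real) \<Rightarrow> real set" where
  "lip_quots P f = {\<bar>f x - f y\<bar> / dist x y | x y. x \<in> P \<and> y \<in> P \<and> x \<noteq> y}"

definition lip_const :: "'a::metric_space set \<Rightarrow> ('a \<Rightarrow> real) \<Rightarrow> real" where
  "lip_const P f = Sup (insert 0 (lip_quots P f))"

definition BL :: "'a::metric_space set \<Rightarrow> ('a \<Rightarrow> real) set" where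
  "BL P = {f. bdd_above ((\<lambda>x. \<bar>f x\<bar>) ` P) \<and> bdd_above (lip_quots P f) \<and> (\<forall>x. x \<notin> P \<longrightarrow> f x = 0)}"

definition bl_norm :: "'a::metric_space set \<Rightarrow> ('a \<Rightarrow> real) \<Rightarrow> real" where
  "bl_norm P f = sup_norm P f + lip_const P f"

definition fm_norm :: "'a::metric_space set \<Rightarrow> ('a \<Rightarrow> real) \<Rightarrow> real" where
  "fm_norm P f = max (sup_norm P f) (lip_const P f)"

definition ball_BL :: "'a::metric_space set \<Rightarrow> ('a \<Rightarrow> real) set" where
  "ball_BL P = {f \<in> BL P. bl_norm P f \<le> 1}"

definition ball_FM :: "'a::metric_space set \<Rightarrow> ('a \<Rightarrow> real) set" where
  "ball_FM P = {f \<in> BL P. fm_norm P f \<le> 1}"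

definition extreme_pts :: "('a \<Rightarrow> real) set \<Rightarrow> ('a \<Rightarrow> real) set" where
  "extreme_pts B = {f \<in> B. \<forall>g\<in>B. \<forall>h\<in>B. \<forall>t::real. 0 < t \<and> t < 1 \<and>
       f = (\<lambda>x. t * g x + (1 - t) * h x) \<longrightarrow> g = h}"

definition extreme_pts_star :: "'a set \<Rightarrow> ('a \<Rightarrow> real) set \<Rightarrow> ('a \<Rightarrow> real) set" where
  "extreme_pts_star P B = extreme_pts B - {f. \<forall>x\<in>P. \<bar>f x\<bar> = 1}"

definition ext0 :: "'a::metric_space set \<Rightarrow> ('a \<Rightarrow> real) \<Rightarrow> 'a \<Rightarrow> real" where
  "ext0 P f x = (SUP p\<in>P. f p - lip_const P f * dist p x)"

definition ext_op :: "'a::metric_space set \<Rightarrow> ('a \<Rightarrow> real) \<Rightarrow> 'a \<Rightarrow> real" where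
  "ext_op P f x = max (ext0 P f x) (- sup_norm P f)"

definition hP :: "'a::metric_space set \<Rightarrow> 'a \<Rightarrow> real" where
  "hP P x = max (-1) (SUP p\<in>P. 1 - dist x p)"

definition E_BL :: "('a::metric_space \<Rightarrow> real) set" where
  "E_BL = (\<Union>P\<in>{P. finite P}. ext_op P ` extreme_pts_star P (ball_BL P))
          \<union> {(\<lambda>_. 1), (\<lambda>_. -1)}"

definition E_FM :: "('a::metric_space \<Rightarrow> real) set" where
  "E_FM = (\<Union>P\<in>{P. finite P}. ext_op P ` extreme_pts_star P (ball_FM P))
          \<union> {f \<in> ball_FM UNIV. \<forall>x. \<bar>f x\<bar> = 1}
          \<union> {hP P | P. finite P \<and> P \<noteq> {}}"

definition M_set :: "('a \<Rightarrow> real) \<Rightarrow> 'a set" where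
  "M_set f = {x. \<bar>f x\<bar> = sup_norm UNIV f}"

definition J_FM :: "('a::metric_space \<Rightarrow> real) set" where
  "J_FM = {f \<in> ball_FM UNIV. sup_norm UNIV f = 1 \<and>
      (\<exists>Pf. finite Pf \<and> Pf \<noteq> {} \<and>
        (\<forall>x. x \<notin> M_set f \<longrightarrow> (\<exists>p\<in>Pf. \<bar>f x - f p\<bar> = dist x p)))}"

definition J_BL_hat :: "('a::metric_space \<Rightarrow> real) set" where
  "J_BL_hat = {f \<in> ball_BL UNIV. bl_norm UNIV f = 1 \<and>
      f ` M_set f = {sup_norm UNIV f, - sup_norm UNIV f} \<and>
      (\<exists>Pf. finite Pf \<and> Pf \<noteq> {} \<and>
        (\<forall>x. x \<notin> M_set f \<longrightarrow>
           (\<exists>p\<in>Pf. \<bar>f x - f p\<bar> = (1 - sup_norm UNIV f) * dist x p)))}"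

definition J_BL :: "('a::metric_space \<Rightarrow> real) set" where
  "J_BL = {(\<lambda>_. 1), (\<lambda>_. -1)} \<union> J_BL_hat"

end

theory Submission
  imports Defs
begin

text \<open>Apart from the functions with \<open>\<bar>f\<bar> = 1\<close> everywhere (for which \<open>M\<^sub>f = S\<close> and there is
  nothing to check), every member of \<open>E\<close> is a truncated McShane extension
  \<open>F x = max (- \<parallel>g\<parallel>\<^sub>\<infinity>) (sup\<^sub>p\<^sub>\<in>\<^sub>P g p - L d(p, x))\<close> of an \<open>L\<close>-Lipschitz function \<open>g\<close> on a
  finite set \<open>P\<close>: for \<open>ext_op\<close> with \<open>L = |g|\<^sub>L\<close>, for \<open>h\<^sub>P\<close> with \<open>g = 1\<close> and \<open>L = 1\<close>. Such an \<open>F\<close>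
  extends \<open>g\<close>, has the same sup norm, is \<open>L\<close>-Lipschitz, and wherever \<open>\<bar>F x\<bar> < \<parallel>g\<parallel>\<^sub>\<infinity>\<close> the
  supremum is attained at some \<open>p \<in> P\<close>, so that \<open>\<bar>F x - F p\<bar> = L d(x, p)\<close>.

  It remains to pin down the norms of the extreme points \<open>f\<close> of the finite-dimensional balls.
  If \<open>f \<plusminus> e\<close> both lie in the ball then \<open>e = 0\<close>; perturbations of this kind show
  \<open>\<parallel>f\<parallel>\<^sub>\<infinity> + |f|\<^sub>L = 1\<close> in the BL case, and that \<open>f\<close> attains both \<open>\<plusminus>\<parallel>f\<parallel>\<^sub>\<infinity>\<close> unless \<open>\<bar>f\<bar> = 1\<close>
  on \<open>P\<close>; in the FM case they show \<open>\<parallel>f\<parallel>\<^sub>\<infinity> = |f|\<^sub>L = 1\<close>.\<close>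

lemma sup_norm_least:
  assumes "0 \<le> c" "\<And>x. x \<in> P \<Longrightarrow> \<bar>f x\<bar> \<le> c"
  shows "sup_norm P f \<le> c"
  unfolding sup_norm_def by (rule cSup_least) (use assms in auto)

lemma abs_le_sup_norm:
  assumes "bdd_above ((\<lambda>x. \<bar>f x\<bar>) ` P)" "x \<in> P"
  shows "\<bar>f x\<bar> \<le> sup_norm P f"
  unfolding sup_norm_def by (rule cSup_upper) (use assms in auto)

lemma sup_norm_nonneg: "bdd_above ((\<lambda>x. \<bar>f x\<bar>) ` P) \<Longrightarrow> 0 \<le> sup_norm P f"
  unfolding sup_norm_def by (rule cSup_upper) auto

lemma lip_quots_le:
  assumes "\<And>x y. x \<in> P \<Longrightarrow> y \<in> P \<Longrightarrow> \<bar>f x - f y\<bar> \<le> c * dist x y" "z \<in> lip_quots P f"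
  shows "z \<le> c"
proof -
  obtain x y where "x \<in> P" "y \<in> P" "x \<noteq> y" "z = \<bar>f x - f y\<bar> / dist x y"
    using assms(2) unfolding lip_quots_def by blast
  then show ?thesis using assms(1) by (simp add: divide_le_eq)
qed

lemma bdd_above_lip_quots:
  "(\<And>x y. x \<in> P \<Longrightarrow> y \<in> P \<Longrightarrow> \<bar>f x - f y\<bar> \<le> c * dist x y) \<Longrightarrow> bdd_above (lip_quots P f)"
  using lip_quots_le by (intro bdd_aboveI) blast

lemma lip_const_least:
  assumes "0 \<le> c" "\<And>x y. x \<in> P \<Longrightarrow> y \<in> P \<Longrightarrow> \<bar>f x - f y\<bar> \<le> c * dist x y"
  shows "lip_const P f \<le> c"
  unfolding lip_const_def by (rule cSup_least) (use assms lip_quots_le[OF assms(2)] in auto)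

lemma abs_diff_le_lip_const:
  assumes "bdd_above (lip_quots P f)" "x \<in> P" "y \<in> P"
  shows "\<bar>f x - f y\<bar> \<le> lip_const P f * dist x y"
proof (cases "x = y")
  case False
  then have "\<bar>f x - f y\<bar> / dist x y \<in> lip_quots P f"
    using assms unfolding lip_quots_def by blast
  then have "\<bar>f x - f y\<bar> / dist x y \<le> lip_const P f"
    unfolding lip_const_def by (rule cSup_upper[OF insertI2]) (use assms in auto)
  then show ?thesis using False by (simp add: divide_le_eq)
qed simp

lemma lip_const_nonneg: "bdd_above (lip_quots P f) \<Longrightarrow> 0 \<le> lip_const P f"
  unfolding lip_const_def by (rule cSup_upper) auto

lemma
  assumes "finite P"
  shows bdd_above_abs_finite: "bdd_above ((\<lambda>x. \<bar>f x\<bar>) ` P)"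
    and bdd_above_lip_quots_finite: "bdd_above (lip_quots P f)"
proof -
  show "bdd_above ((\<lambda>x. \<bar>f x\<bar>) ` P)" using assms by simp
  have "lip_quots P f \<subseteq> (\<lambda>(x, y). \<bar>f x - f y\<bar> / dist x y) ` (P \<times> P)"
    unfolding lip_quots_def by auto
  then show "bdd_above (lip_quots P f)"
    using assms by (meson bdd_above_finite finite_SigmaI finite_imageI finite_subset)
qed

lemmas abs_le_sup_norm_finite = abs_le_sup_norm[OF bdd_above_abs_finite]
lemmas sup_norm_nonneg_finite = sup_norm_nonneg[OF bdd_above_abs_finite]
lemmas abs_diff_le_lip_const_finite = abs_diff_le_lip_const[OF bdd_above_lip_quots_finite]
lemmas lip_const_nonneg_finite = lip_const_nonneg[OF bdd_above_lip_quots_finite]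

lemma sup_norm_uminus: "sup_norm P (- f) = sup_norm P f"
  by (simp add: sup_norm_def)

lemma lip_quots_uminus: "lip_quots P (- f) = lip_quots P f"
  by (simp add: lip_quots_def abs_minus_commute)

lemma lip_const_uminus: "lip_const P (- f) = lip_const P f"
  by (simp add: lip_const_def lip_quots_uminus)

lemma ball_BL_finiteI:
  assumes "finite P" "P \<noteq> {}" "\<And>x. x \<notin> P \<Longrightarrow> g x = 0" "0 \<le> K" "A + K \<le> 1"
    "\<And>x. x \<in> P \<Longrightarrow> \<bar>g x\<bar> \<le> A"
    "\<And>x y. x \<in> P \<Longrightarrow> y \<in> P \<Longrightarrow> \<bar>g x - g y\<bar> \<le> K * dist x y"
  shows "g \<in> ball_BL P"
proof -
  have "0 \<le> A" using assms(2,6) by force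
  then have "sup_norm P g \<le> A" "lip_const P g \<le> K"
    using assms by (auto intro: sup_norm_least lip_const_least)
  then show ?thesis
    using assms bdd_above_abs_finite[OF assms(1)] bdd_above_lip_quots_finite[OF assms(1)]
    unfolding ball_BL_def BL_def bl_norm_def by auto
qed

lemma ball_FM_finite_iff:
  assumes "finite P"
  shows "g \<in> ball_FM P \<longleftrightarrow> (\<forall>x. x \<notin> P \<longrightarrow> g x = 0) \<and> (\<forall>x\<in>P. \<bar>g x\<bar> \<le> 1) \<and>
    (\<forall>x\<in>P. \<forall>y\<in>P. \<bar>g x - g y\<bar> \<le> dist x y)"
proof
  assume g: "g \<in> ball_FM P"
  then have sup: "sup_norm P g \<le> 1" and lip: "lip_const P g \<le> 1"
    by (simp_all add: ball_FM_def fm_norm_def)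
  have "\<bar>g x\<bar> \<le> 1" if "x \<in> P" for x
    using abs_le_sup_norm_finite[OF assms that, of g] sup by simp
  moreover have "\<bar>g x - g y\<bar> \<le> dist x y" if "x \<in> P" "y \<in> P" for x y
    using abs_diff_le_lip_const_finite[OF assms that, of g] mult_right_mono[OF lip zero_le_dist[of x y]]
    by simp
  ultimately show "(\<forall>x. x \<notin> P \<longrightarrow> g x = 0) \<and> (\<forall>x\<in>P. \<bar>g x\<bar> \<le> 1) \<and>
      (\<forall>x\<in>P. \<forall>y\<in>P. \<bar>g x - g y\<bar> \<le> dist x y)"
    using g by (simp add: ball_FM_def BL_def)
next
  assume "(\<forall>x. x \<notin> P \<longrightarrow> g x = 0) \<and> (\<forall>x\<in>P. \<bar>g x\<bar> \<le> 1) \<and>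
    (\<forall>x\<in>P. \<forall>y\<in>P. \<bar>g x - g y\<bar> \<le> dist x y)"
  moreover from this have "sup_norm P g \<le> 1" "lip_const P g \<le> 1"
    by (auto intro: sup_norm_least lip_const_least)
  ultimately show "g \<in> ball_FM P"
    using bdd_above_abs_finite[OF assms] bdd_above_lip_quots_finite[OF assms]
    unfolding ball_FM_def BL_def fm_norm_def by auto
qed

lemma ball_BL_uminus: "g \<in> ball_BL P \<Longrightarrow> - g \<in> ball_BL P"
  by (simp add: ball_BL_def BL_def bl_norm_def sup_norm_uminus lip_quots_uminus lip_const_uminus)

lemma extreme_pts_perturb:
  assumes "f \<in> extreme_pts B" "(\<lambda>x. f x + e x) \<in> B" "(\<lambda>x. f x - e x) \<in> B"
  shows "e x = 0"
proof -
  have extreme: "\<forall>g\<in>B. \<forall>h\<in>B. \<forall>t::real.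
      0 < t \<and> t < 1 \<and> f = (\<lambda>x. t * g x + (1 - t) * h x) \<longrightarrow> g = h"
    using assms(1) unfolding extreme_pts_def by blast
  have "(\<lambda>x. f x + e x) = (\<lambda>x. f x - e x)"
    by (rule extreme[rule_format, OF assms(2,3), of "1/2"]) (simp add: fun_eq_iff field_simps)
  then show ?thesis by (simp add: fun_eq_iff)
qed

lemma extreme_pts_uminus:
  assumes "\<And>g. g \<in> B \<Longrightarrow> - g \<in> B" "f \<in> extreme_pts B"
  shows "- f \<in> extreme_pts B"
  unfolding extreme_pts_def
proof (intro CollectI conjI ballI allI impI)
  show "- f \<in> B" using assms unfolding extreme_pts_def by blast
  fix g h and t :: real
  assume "g \<in> B" "h \<in> B" and t: "0 < t \<and> t < 1 \<and> - f = (\<lambda>x. t * g x + (1 - t) * h x)"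
  then have "- g \<in> B" "- h \<in> B" using assms(1) by auto
  moreover have "f = (\<lambda>x. t * (- g) x + (1 - t) * (- h) x)"
  proof
    fix x
    have "- f x = t * g x + (1 - t) * h x" using t by (simp add: fun_eq_iff)
    then show "f x = t * (- g) x + (1 - t) * (- h) x" by simp
  qed
  ultimately have "- g = - h" using assms(2) t unfolding extreme_pts_def by blast
  then show "g = h" by (simp add: fun_eq_iff)
qed

lemma extreme_pts_star_uminus:
  assumes "\<And>g. g \<in> B \<Longrightarrow> - g \<in> B" "f \<in> extreme_pts_star P B"
  shows "- f \<in> extreme_pts_star P B"
  using assms extreme_pts_uminus[OF assms(1)] unfolding extreme_pts_star_def by auto

lemma finite_SUP_upper:
  fixes h :: "'a \<Rightarrow> real"
  shows "finite P \<Longrightarrow> p \<in> P \<Longrightarrow> h p \<le> (SUP q\<in>P. h q)"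
  by (simp add: cSUP_upper)

lemma finite_SUP_attained:
  fixes h :: "'a \<Rightarrow> real"
  shows "finite P \<Longrightarrow> P \<noteq> {} \<Longrightarrow> \<exists>p\<in>P. (SUP q\<in>P. h q) = h p"
  using Max_in[of "h ` P"] by (auto simp: cSup_eq_Max simp del: Max_in)

definition mcshane :: "'a::metric_space set \<Rightarrow> ('a \<Rightarrow> real) \<Rightarrow> real \<Rightarrow> 'a \<Rightarrow> real" where
  "mcshane P g L x = max (- sup_norm P g) (SUP p\<in>P. g p - L * dist p x)"

lemma ext_op_eq_mcshane: "ext_op P f = mcshane P f (lip_const P f)"
  by (simp add: ext_op_def ext0_def mcshane_def fun_eq_iff max.commute)

lemma sup_norm_const_one: "P \<noteq> {} \<Longrightarrow> sup_norm P (\<lambda>_. 1) = 1"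
  by (simp add: sup_norm_def image_constant_conv cSup_eq_Max)

lemma hP_eq_mcshane: "P \<noteq> {} \<Longrightarrow> hP P = mcshane P (\<lambda>_. 1) 1"
  by (simp add: hP_def mcshane_def sup_norm_const_one dist_commute fun_eq_iff)

locale finite_lipschitz =
  fixes P :: "'a::metric_space set" and g :: "'a \<Rightarrow> real" and L :: real
  assumes finite: "finite P" and nonempty: "P \<noteq> {}" and L_nonneg: "0 \<le> L"
    and lipschitz: "\<And>p q. p \<in> P \<Longrightarrow> q \<in> P \<Longrightarrow> \<bar>g p - g q\<bar> \<le> L * dist p q"
begin

lemma mcshane_eq:
  assumes "p \<in> P"
  shows "mcshane P g L p = g p"
proof -
  have below: "g q - L * dist q p \<le> g p" if "q \<in> P" for q
    using lipschitz[OF that assms] by simp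
  have "(SUP q\<in>P. g q - L * dist q p) = g p"
  proof (rule antisym)
    show "(SUP q\<in>P. g q - L * dist q p) \<le> g p"
      using nonempty below by (rule cSUP_least)
    show "g p \<le> (SUP q\<in>P. g q - L * dist q p)"
      using finite_SUP_upper[OF finite assms, of "\<lambda>q. g q - L * dist q p"] by simp
  qed
  moreover have "- sup_norm P g \<le> g p"
    using abs_le_sup_norm_finite[OF finite assms, of g] by linarith
  ultimately show ?thesis by (simp add: mcshane_def)
qed

lemma abs_mcshane_le: "\<bar>mcshane P g L x\<bar> \<le> sup_norm P g"
proof -
  obtain p where p: "p \<in> P" "(SUP q\<in>P. g q - L * dist q x) = g p - L * dist p x"
    using finite_SUP_attained[OF finite nonempty] by blast
  have "g p - L * dist p x \<le> sup_norm P g"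
    using abs_le_sup_norm_finite[OF finite p(1), of g] mult_nonneg_nonneg[OF L_nonneg zero_le_dist[of p x]]
    by linarith
  then show ?thesis
    using p sup_norm_nonneg_finite[OF finite, of g] by (simp add: mcshane_def abs_le_iff)
qed

lemma mcshane_lipschitz: "\<bar>mcshane P g L x - mcshane P g L y\<bar> \<le> L * dist x y"
proof -
  define s where "s z = (SUP p\<in>P. g p - L * dist p z)" for z
  have s_diff: "s u - s v \<le> L * dist u v" for u v
  proof -
    obtain p where p: "p \<in> P" "s u = g p - L * dist p u"
      using finite_SUP_attained[OF finite nonempty] unfolding s_def by blast
    have "g p - L * dist p v \<le> s v"
      unfolding s_def by (rule finite_SUP_upper[OF finite p(1)])
    moreover have "L * dist p v \<le> L * dist p u + L * dist u v"
      using mult_left_mono[OF dist_triangle[of p v u] L_nonneg] by (simp add: distrib_left)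
    ultimately show ?thesis using p by linarith
  qed
  show ?thesis
    using s_diff[of x y] s_diff[of y x] unfolding mcshane_def s_def[symmetric]
    by (simp add: dist_commute max_def abs_le_iff)
qed

lemma mcshane_in_BL: "mcshane P g L \<in> BL UNIV"
proof -
  have "bdd_above (range (\<lambda>x. \<bar>mcshane P g L x\<bar>))"
    by (rule bdd_aboveI2) (rule abs_mcshane_le)
  moreover have "bdd_above (lip_quots UNIV (mcshane P g L))"
    by (rule bdd_above_lip_quots) (rule mcshane_lipschitz)
  ultimately show ?thesis by (simp add: BL_def)
qed

lemma sup_norm_mcshane: "sup_norm UNIV (mcshane P g L) = sup_norm P g"
proof (rule antisym)
  have bdd: "bdd_above ((\<lambda>x. \<bar>mcshane P g L x\<bar>) ` UNIV)"
    using mcshane_in_BL unfolding BL_def by simp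
  show "sup_norm UNIV (mcshane P g L) \<le> sup_norm P g"
    using abs_mcshane_le sup_norm_nonneg_finite[OF finite] by (intro sup_norm_least) auto
  show "sup_norm P g \<le> sup_norm UNIV (mcshane P g L)"
  proof (rule sup_norm_least)
    show "0 \<le> sup_norm UNIV (mcshane P g L)" using sup_norm_nonneg[OF bdd] .
    show "\<bar>g p\<bar> \<le> sup_norm UNIV (mcshane P g L)" if "p \<in> P" for p
      using abs_le_sup_norm[OF bdd UNIV_I, of p] mcshane_eq[OF that] by simp
  qed
qed

lemma lip_const_mcshane_le: "lip_const UNIV (mcshane P g L) \<le> L"
  using mcshane_lipschitz L_nonneg by (intro lip_const_least) auto

lemma lip_const_le_lip_const_mcshane: "lip_const P g \<le> lip_const UNIV (mcshane P g L)"
proof -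
  have bdd: "bdd_above (lip_quots UNIV (mcshane P g L))"
    using mcshane_in_BL unfolding BL_def by simp
  show ?thesis
  proof (rule lip_const_least)
    show "0 \<le> lip_const UNIV (mcshane P g L)" using lip_const_nonneg[OF bdd] .
    show "\<bar>g p - g q\<bar> \<le> lip_const UNIV (mcshane P g L) * dist p q" if "p \<in> P" "q \<in> P" for p q
      using abs_diff_le_lip_const[OF bdd UNIV_I UNIV_I, of p q] mcshane_eq that by simp
  qed
qed

lemma mcshane_slope_attained:
  assumes "\<bar>mcshane P g L x\<bar> < sup_norm P g"
  shows "\<exists>p\<in>P. \<bar>mcshane P g L x - mcshane P g L p\<bar> = L * dist x p"
proof -
  obtain p where p: "p \<in> P" "(SUP q\<in>P. g q - L * dist q x) = g p - L * dist p x"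
    using finite_SUP_attained[OF finite nonempty] by blast
  with assms have "mcshane P g L x = g p - L * dist p x"
    by (auto simp: mcshane_def max_def split: if_splits)
  then have "\<bar>mcshane P g L x - mcshane P g L p\<bar> = L * dist x p"
    using p(1) mcshane_eq L_nonneg by (simp add: dist_commute)
  then show ?thesis using p(1) by blast
qed

lemma mcshane_in_J_FM:
  assumes "L = 1" "sup_norm P g = 1"
  shows "mcshane P g L \<in> J_FM"
proof -
  let ?F = "mcshane P g L"
  have sup_norm: "sup_norm UNIV ?F = 1"
    using sup_norm_mcshane assms(2) by simp
  have "\<bar>?F x\<bar> < 1" if "x \<notin> M_set ?F" for x
    using that abs_mcshane_le[of x] assms(2) sup_norm by (auto simp: M_set_def)
  then have "\<forall>x. x \<notin> M_set ?F \<longrightarrow> (\<exists>p\<in>P. \<bar>?F x - ?F p\<bar> = dist x p)"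
    using mcshane_slope_attained assms by auto
  moreover have "?F \<in> ball_FM UNIV"
    using mcshane_in_BL lip_const_mcshane_le assms sup_norm_mcshane
    by (simp add: ball_FM_def fm_norm_def)
  ultimately show ?thesis
    using finite nonempty sup_norm unfolding J_FM_def by blast
qed

lemma mcshane_in_J_BL_hat:
  assumes "L = lip_const P g" "sup_norm P g + L = 1"
    and "p \<in> P" "g p = sup_norm P g" "q \<in> P" "g q = - sup_norm P g"
  shows "mcshane P g L \<in> J_BL_hat"
proof -
  let ?F = "mcshane P g L" and ?a = "sup_norm P g"
  have "lip_const UNIV ?F = L"
    using lip_const_mcshane_le lip_const_le_lip_const_mcshane assms(1) by simp
  then have "?F \<in> ball_BL UNIV" "bl_norm UNIV ?F = 1"
    using mcshane_in_BL sup_norm_mcshane assms(2) by (simp_all add: ball_BL_def bl_norm_def)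
  moreover have M: "M_set ?F = {x. \<bar>?F x\<bar> = ?a}"
    by (simp add: M_set_def sup_norm_mcshane)
  have "?F ` M_set ?F = {?a, - ?a}"
  proof
    show "?F ` M_set ?F \<subseteq> {?a, - ?a}" by (auto simp: M abs_if)
    have "?F p = ?a" "?F q = - ?a" using mcshane_eq assms(3-6) by simp_all
    moreover from this have "p \<in> M_set ?F" "q \<in> M_set ?F"
      using sup_norm_nonneg_finite[OF finite, of g] by (simp_all add: M)
    ultimately show "{?a, - ?a} \<subseteq> ?F ` M_set ?F"
      by (metis empty_subsetI image_eqI insert_subset)
  qed
  moreover have "\<bar>?F x\<bar> < ?a" if "x \<notin> M_set ?F" for x
    using that abs_mcshane_le[of x] by (auto simp: M)
  then have "\<forall>x. x \<notin> M_set ?F \<longrightarrow> (\<exists>p\<in>P. \<bar>?F x - ?F p\<bar> = (1 - ?a) * dist x p)"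
    using mcshane_slope_attained assms(2) by (metis add_diff_cancel_left')
  ultimately show ?thesis
    using finite nonempty unfolding J_BL_hat_def mem_Collect_eq sup_norm_mcshane by blast
qed

end

lemma finite_lipschitz_lip_const:
  "finite P \<Longrightarrow> P \<noteq> {} \<Longrightarrow> finite_lipschitz P f (lip_const P f)"
  by unfold_locales (auto intro: abs_diff_le_lip_const_finite lip_const_nonneg_finite)

lemma sup_norm_add_lip_const_extreme_BL:
  assumes "finite P" "P \<noteq> {}" and f: "f \<in> extreme_pts (ball_BL P)"
  shows "sup_norm P f + lip_const P f = 1"
proof (rule ccontr)
  let ?a = "sup_norm P f" and ?L = "lip_const P f"
  have "f \<in> ball_BL P" using f by (simp add: extreme_pts_def)
  then have vanish: "\<And>x. x \<notin> P \<Longrightarrow> f x = 0" and "?a + ?L \<le> 1"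
    by (auto simp: ball_BL_def BL_def bl_norm_def)
  moreover assume "?a + ?L \<noteq> 1"
  ultimately have slack: "?a + ?L < 1" by simp
  define e where "e x = (if x \<in> P then 1 - ?a - ?L else 0)" for x
  have perturbed: "(\<lambda>x. f x + t * e x) \<in> ball_BL P" if "\<bar>t\<bar> \<le> 1" for t
  proof (rule ball_BL_finiteI[OF assms(1,2), where A = "1 - ?L" and K = ?L])
    have small: "\<bar>t * e x\<bar> \<le> e x" for x
      using that slack mult_right_mono[OF that, of "e x"] by (simp add: e_def abs_mult)
    show "\<bar>f x + t * e x\<bar> \<le> 1 - ?L" if "x \<in> P" for x
    proof -
      have "e x = 1 - ?a - ?L" using that by (simp add: e_def)
      then show ?thesis
        using abs_le_sup_norm_finite[OF assms(1) that, of f] abs_triangle_ineq[of "f x" "t * e x"]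
          small[of x]
        by linarith
    qed
    show "\<bar>f x + t * e x - (f y + t * e y)\<bar> \<le> ?L * dist x y" if "x \<in> P" "y \<in> P" for x y
      using abs_diff_le_lip_const_finite[OF assms(1) that] that by (simp add: e_def)
    show "f x + t * e x = 0" if "x \<notin> P" for x
      using vanish[OF that] that by (simp add: e_def)
    show "0 \<le> ?L" by (rule lip_const_nonneg_finite[OF assms(1)])
  qed simp
  have "(\<lambda>x. f x + e x) \<in> ball_BL P" "(\<lambda>x. f x - e x) \<in> ball_BL P"
    using perturbed[of 1] perturbed[of "-1"] by simp_all
  moreover obtain p where p: "p \<in> P" using assms(2) by blast
  ultimately have "e p = 0" using extreme_pts_perturb[OF f] by blast
  with p slack show False by (simp add: e_def)
qed

lemma extreme_BL_attains_neg_sup_norm: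
  assumes fin: "finite P" and f: "f \<in> extreme_pts_star P (ball_BL P)"
  shows "\<exists>p\<in>P. f p = - sup_norm P f"
proof (rule ccontr)
  let ?a = "sup_norm P f" and ?L = "lip_const P f"
  have ext: "f \<in> extreme_pts (ball_BL P)" and not_unimodular: "\<exists>q\<in>P. \<bar>f q\<bar> \<noteq> 1"
    and "f \<in> ball_BL P"
    using f by (auto simp: extreme_pts_star_def extreme_pts_def)
  then have vanish: "\<And>x. x \<notin> P \<Longrightarrow> f x = 0" by (simp add: ball_BL_def BL_def)
  have P: "P \<noteq> {}" using not_unimodular by blast
  have aL: "?a + ?L = 1" by (rule sup_norm_add_lip_const_extreme_BL[OF fin P ext])
  have bound: "\<And>x. x \<in> P \<Longrightarrow> \<bar>f x\<bar> \<le> ?a" using abs_le_sup_norm_finite[OF fin] .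
  assume "\<not> (\<exists>p\<in>P. f p = - ?a)"
  with bound have "\<forall>p\<in>P. - ?a < f p" by (force simp: abs_le_iff)
  then have "- ?a < Min (f ` P)" using fin P by simp
  define s where "s = min (1/2) ((?a + Min (f ` P)) / 4)"
  have "Min (f ` P) \<le> f x" if "x \<in> P" for x using fin that by simp
  then have s: "0 < s" "s \<le> 1/2" "\<And>x. x \<in> P \<Longrightarrow> 4 * s \<le> ?a + f x"
    using \<open>- ?a < Min (f ` P)\<close> by (force simp: s_def min_def)+
  define e where "e x = (if x \<in> P then f x - 1 else 0)" for x
  txt \<open>On \<open>P\<close>, \<open>f + t e = (1 + t) f - t\<close>: both the sup norm and the Lipschitz constant
    scale by \<open>1 + t\<close> and the sup norm is shifted by \<open>- t\<close>, so the BL norm stays 1. The lower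
    bound \<open>-((1 + t) a - t)\<close> survives because \<open>f\<close> stays \<open>4 s\<close> above \<open>- a\<close>.\<close>
  have perturbed: "(\<lambda>x. f x + t * e x) \<in> ball_BL P" if t: "\<bar>t\<bar> \<le> s" for t
  proof (rule ball_BL_finiteI[OF fin P, where A = "(1 + t) * ?a - t" and K = "(1 + t) * ?L"])
    have t_pos: "0 < 1 + t" and t_half: "1/2 \<le> 1 + t" using t s by auto
    show "\<bar>f x + t * e x\<bar> \<le> (1 + t) * ?a - t" if x: "x \<in> P" for x
    proof -
      have eq: "f x + t * e x = (1 + t) * f x - t" using x by (simp add: e_def algebra_simps)
      have upper: "(1 + t) * f x \<le> (1 + t) * ?a"
        using bound[OF x] t_pos by (intro mult_left_mono) auto
      have "(1/2) * (?a + f x) \<le> (1 + t) * (?a + f x)"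
        using t_half s(3)[OF x] s(1) by (intro mult_right_mono) auto
      then have lower: "2 * t \<le> (1 + t) * ?a + (1 + t) * f x"
        using s(3)[OF x] t by (simp add: distrib_left)
      show ?thesis
        unfolding eq abs_le_iff using upper lower by (intro conjI) linarith+
    qed
    show "\<bar>f x + t * e x - (f y + t * e y)\<bar> \<le> (1 + t) * ?L * dist x y"
      if "x \<in> P" "y \<in> P" for x y
    proof -
      have "f x + t * e x - (f y + t * e y) = (1 + t) * (f x - f y)"
        using that by (simp add: e_def algebra_simps)
      then have "\<bar>f x + t * e x - (f y + t * e y)\<bar> = (1 + t) * \<bar>f x - f y\<bar>"
        using t_pos by (simp add: abs_mult)
      also have "\<dots> \<le> (1 + t) * (?L * dist x y)"
        using abs_diff_le_lip_const_finite[OF fin that] t_pos by (intro mult_left_mono) auto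
      finally show ?thesis by simp
    qed
    show "0 \<le> (1 + t) * ?L" using t_pos lip_const_nonneg_finite[OF fin] by simp
    have "(1 + t) * ?a - t + (1 + t) * ?L = (1 + t) * (?a + ?L) - t" by (simp add: algebra_simps)
    then show "(1 + t) * ?a - t + (1 + t) * ?L \<le> 1" using aL by simp
    show "f x + t * e x = 0" if "x \<notin> P" for x using vanish[OF that] that by (simp add: e_def)
  qed
  have "(\<lambda>x. f x + s * e x) \<in> ball_BL P" "(\<lambda>x. f x - s * e x) \<in> ball_BL P"
    using perturbed[of s] perturbed[of "- s"] s by simp_all
  then have no_bump: "s * e x = 0" for x by (rule extreme_pts_perturb[OF ext, of "\<lambda>x. s * e x"])
  have "f q = 1" if "q \<in> P" for q using no_bump[of q] that s(1) by (simp add: e_def)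
  with not_unimodular show False by auto
qed

lemma extreme_BL_attains_sup_norm:
  assumes "finite P" "f \<in> extreme_pts_star P (ball_BL P)"
  shows "\<exists>p\<in>P. f p = sup_norm P f"
  using extreme_BL_attains_neg_sup_norm[OF assms(1) extreme_pts_star_uminus[OF ball_BL_uminus assms(2)]]
  by (simp add: sup_norm_uminus)

lemma sup_norm_extreme_FM:
  assumes fin: "finite P" and P: "P \<noteq> {}" and f: "f \<in> extreme_pts (ball_FM P)"
  shows "sup_norm P f = 1"
proof (rule ccontr)
  let ?a = "sup_norm P f"
  have "f \<in> ball_FM P" using f by (simp add: extreme_pts_def)
  then have ball: "\<forall>x. x \<notin> P \<longrightarrow> f x = 0" "\<forall>x\<in>P. \<forall>y\<in>P. \<bar>f x - f y\<bar> \<le> dist x y"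
    and "?a \<le> 1"
    using ball_FM_finite_iff[OF fin] by (auto simp: ball_FM_def fm_norm_def)
  moreover assume "?a \<noteq> 1"
  ultimately have slack: "?a < 1" by simp
  define e where "e x = (if x \<in> P then 1 - ?a else 0)" for x
  have perturbed: "(\<lambda>x. f x + t * e x) \<in> ball_FM P" if t: "\<bar>t\<bar> \<le> 1" for t
  proof -
    have "\<bar>f x + t * e x\<bar> \<le> 1" if x: "x \<in> P" for x
    proof -
      have "\<bar>t * e x\<bar> \<le> 1 - ?a"
        using x slack mult_right_mono[OF t, of "1 - ?a"] by (simp add: e_def abs_mult)
      then show ?thesis
        using abs_le_sup_norm_finite[OF fin x, of f] abs_triangle_ineq[of "f x" "t * e x"] by linarith
    qed
    then show ?thesis using ball by (simp add: ball_FM_finite_iff[OF fin] e_def)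
  qed
  have "(\<lambda>x. f x + e x) \<in> ball_FM P" "(\<lambda>x. f x - e x) \<in> ball_FM P"
    using perturbed[of 1] perturbed[of "-1"] by simp_all
  moreover obtain p where p: "p \<in> P" using P by blast
  ultimately have "e p = 0" using extreme_pts_perturb[OF f] by blast
  with p slack show False by (simp add: e_def)
qed

lemma lip_const_extreme_FM:
  assumes fin: "finite P" and f: "f \<in> extreme_pts_star P (ball_FM P)"
  shows "lip_const P f = 1"
proof (rule ccontr)
  let ?L = "lip_const P f"
  have ext: "f \<in> extreme_pts (ball_FM P)" and "f \<in> ball_FM P"
    using f by (auto simp: extreme_pts_star_def extreme_pts_def)
  then have ball: "\<forall>x. x \<notin> P \<longrightarrow> f x = 0" "\<forall>x\<in>P. \<bar>f x\<bar> \<le> 1" and "?L \<le> 1"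
    using ball_FM_finite_iff[OF fin] by (auto simp: ball_FM_def fm_norm_def)
  moreover assume "?L \<noteq> 1"
  ultimately have slack: "?L < 1" by simp
  obtain q where q: "q \<in> P" "\<bar>f q\<bar> \<noteq> 1"
    using f by (auto simp: extreme_pts_star_def)
  with ball have fq: "\<bar>f q\<bar> < 1" by force
  txt \<open>Move \<open>f\<close> at the single point \<open>q\<close> by at most \<open>\<epsilon>\<close>, which both the gap \<open>1 - \<bar>f q\<bar>\<close>
    and the Lipschitz slack \<open>(1 - L) d(x, q)\<close> absorb.\<close>
  define \<epsilon> where "\<epsilon> = Min (insert (1 - \<bar>f q\<bar>) ((\<lambda>x. (1 - ?L) * dist x q) ` (P - {q})))"
  have \<epsilon>: "0 < \<epsilon>" "\<epsilon> \<le> 1 - \<bar>f q\<bar>" "\<And>x. x \<in> P \<Longrightarrow> x \<noteq> q \<Longrightarrow> \<epsilon> \<le> (1 - ?L) * dist x q"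
    using fin fq slack by (auto simp: \<epsilon>_def)
  define e where "e x = (if x = q then \<epsilon> else 0)" for x
  have perturbed: "(\<lambda>x. f x + t * e x) \<in> ball_FM P" if t: "\<bar>t\<bar> \<le> 1" for t
  proof -
    have te: "\<bar>t * e x\<bar> \<le> \<epsilon>" for x
      using mult_right_mono[OF t, of \<epsilon>] \<epsilon>(1) by (simp add: e_def abs_mult)
    have "\<bar>f x + t * e x\<bar> \<le> 1" if "x \<in> P" for x
      using ball(2) that te[of x] \<epsilon>(2) by (cases "x = q") (auto simp: e_def)
    moreover have "\<bar>f x + t * e x - (f y + t * e y)\<bar> \<le> dist x y" if "x \<in> P" "y \<in> P" for x y
    proof (cases "x = q \<longleftrightarrow> y = q")
      case True
      then have "\<bar>f x + t * e x - (f y + t * e y)\<bar> = \<bar>f x - f y\<bar>" by (auto simp: e_def)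
      then show ?thesis
        using abs_diff_le_lip_const_finite[OF fin that, of f] slack
          mult_right_mono[of ?L 1 "dist x y"] by simp
    next
      case False
      then have "\<bar>f x + t * e x - (f y + t * e y)\<bar> \<le> \<bar>f x - f y\<bar> + \<epsilon>"
        using te[of x] te[of y] by (auto simp: e_def)
      moreover have "\<epsilon> \<le> (1 - ?L) * dist x y"
        using \<epsilon>(3)[of x] \<epsilon>(3)[of y] that False by (auto simp: dist_commute)
      ultimately show ?thesis
        using abs_diff_le_lip_const_finite[OF fin that, of f] by (simp add: algebra_simps)
    qed
    ultimately show ?thesis using ball q(1) by (auto simp: ball_FM_finite_iff[OF fin] e_def)
  qed
  have "(\<lambda>x. f x + e x) \<in> ball_FM P" "(\<lambda>x. f x - e x) \<in> ball_FM P"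
    using perturbed[of 1] perturbed[of "-1"] by simp_all
  then have "e q = 0" using extreme_pts_perturb[OF ext] by blast
  with \<epsilon>(1) show False by (simp add: e_def)
qed

lemma ext_op_in_J_BL:
  assumes fin: "finite P" and f: "f \<in> extreme_pts_star P (ball_BL P)"
  shows "ext_op P f \<in> J_BL"
proof -
  have P: "P \<noteq> {}" and ext: "f \<in> extreme_pts (ball_BL P)"
    using f by (auto simp: extreme_pts_star_def)
  interpret finite_lipschitz P f "lip_const P f"
    by (rule finite_lipschitz_lip_const[OF fin P])
  obtain p q where "p \<in> P" "f p = sup_norm P f" "q \<in> P" "f q = - sup_norm P f"
    using extreme_BL_attains_sup_norm[OF fin f] extreme_BL_attains_neg_sup_norm[OF fin f] by blast
  then have "mcshane P f (lip_const P f) \<in> J_BL_hat"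
    using sup_norm_add_lip_const_extreme_BL[OF fin P ext] by (intro mcshane_in_J_BL_hat) auto
  then show ?thesis by (simp add: ext_op_eq_mcshane J_BL_def)
qed

lemma ext_op_in_J_FM:
  assumes fin: "finite P" and f: "f \<in> extreme_pts_star P (ball_FM P)"
  shows "ext_op P f \<in> J_FM"
proof -
  have P: "P \<noteq> {}" and ext: "f \<in> extreme_pts (ball_FM P)"
    using f by (auto simp: extreme_pts_star_def)
  interpret finite_lipschitz P f "lip_const P f"
    by (rule finite_lipschitz_lip_const[OF fin P])
  show ?thesis
    unfolding ext_op_eq_mcshane
    using sup_norm_extreme_FM[OF fin P ext] lip_const_extreme_FM[OF fin f]
    by (intro mcshane_in_J_FM)
qed

lemma hP_in_J_FM:
  assumes "finite P" "P \<noteq> {}"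
  shows "hP P \<in> J_FM"
proof -
  interpret finite_lipschitz P "\<lambda>_. 1" 1
    using assms by unfold_locales auto
  show ?thesis
    unfolding hP_eq_mcshane[OF assms(2)] using sup_norm_const_one[OF assms(2)]
    by (intro mcshane_in_J_FM) auto
qed

lemma unimodular_in_J_FM:
  assumes "f \<in> ball_FM UNIV" "\<And>x. \<bar>f x\<bar> = 1"
  shows "f \<in> J_FM"
proof -
  have "sup_norm UNIV f = 1"
    using assms(2) by (simp add: sup_norm_def image_constant_conv cSup_eq_Max)
  then have "M_set f = UNIV" using assms(2) by (simp add: M_set_def)
  then show ?thesis
    using assms(1) \<open>sup_norm UNIV f = 1\<close> unfolding J_FM_def by blast
qed

theorem proposition5p1:
  shows "(E_BL :: ('a::metric_space \<Rightarrow> real) set) \<subseteq> J_BL \<and>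
         (E_FM :: ('a::metric_space \<Rightarrow> real) set) \<subseteq> J_FM"
proof
  show "(E_BL :: ('a::metric_space \<Rightarrow> real) set) \<subseteq> J_BL"
    unfolding E_BL_def using ext_op_in_J_BL by (auto simp: J_BL_def)
  show "(E_FM :: ('a::metric_space \<Rightarrow> real) set) \<subseteq> J_FM"
    unfolding E_FM_def using ext_op_in_J_FM hP_in_J_FM unimodular_in_J_FM by blast
qed

end
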